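(* Let $P$ be a quasi-lattice ordered subsemigroup of a group $Q$ and $\Lambda$ an $(r,d)$-proper topological $P$-graph with path space $\Omega$. Let $A\in\Omega$. If $\lambda'\in A$ is extendable in $A$, then every $\lambda\in\Lambda$ with $\lambda\le\lambda'$ is extendable in $A$.
   Context: Quasi-lattice ordered: $P\subset Q$ subsemigroup with $P\cap P^{-1}=\{e\}$ such that two elements with a common upper bound (for $m\le n$ iff $n=mp$, $p\in P$) have a least upper bound. Topological $P$-graph: small category $\Lambda$, vertices $\Lambda^{(0)}\subset\Lambda$, $r,s:\Lambda\to\Lambda^{(0)}$, composition on pairs with $s(\lambda)=r(\mu)$; $\Lambda,\Lambda^{(0)}$ locally compact Hausdorff, $r,s$ continuous, $s$ a local homeomorphism, inclusion continuous, composition continuous and open; continuous multiplicative degree map $d:\Lambda\to P$, equal to $e$ on vertices, with composition $\Lambda^m*\Lambda^n\to\Lambda^{mn}$ a homeomorphism ($\Lambda^m=d^{-1}(m)$). $(r,d)$-proper: $(r,d):\Lambda\to\Lambda^{(0)}\times P$ proper. $\mu\le\lambda$ iff $\lambda=\mu\nu$ for some $\nu$. $\Omega$: nonempty closed hereditary (closed under $\le$-predecessors) directed (any two elements have a common upper bound inside) subsets of $\Lambda$. $E\subset\Lambda$ is exhaustive if for every $\lambda$ with $r(\lambda)\in r(E)$ there is $\mu\in E$ such that $\lambda,\mu$ have a common upper bound. For $A\in\Omega$, $\lambda\in A$ is extendable in $A$ if for every compact exhaustive $E\subset\Lambda$ with $r(E)$ a neighborhood of $s(\lambda)$ there exists $\mu\in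 E$ with $\lambda\mu\in A$. *)

theory Defs
  imports "HOL-Analysis.Analysis"
begin

text \<open>The group Q is a type of class group_add (written additively, not necessarily
commutative): group product is +, identity e is 0, inverse is uminus.\<close>

definition Qle :: "'q::group_add set \<Rightarrow> 'q \<Rightarrow> 'q \<Rightarrow> bool" where
  "Qle P m n \<longleftrightarrow> (\<exists>p\<in>P. n = m + p)"

definition quasi_lattice_ordered :: "'q::group_add set \<Rightarrow> bool" where
  "quasi_lattice_ordered P \<longleftrightarrow>
     (\<forall>a\<in>P. \<forall>b\<in>P. a + b \<in> P) \<and>
     P \<inter> uminus ` P = {0} \<and>
     (\<forall>x y. (\<exists>z. Qle P x z \<and> Qle P y z) \<longrightarrow>
        (\<exists>l. Qle P x l \<and> Qle P y l \<and> (\<forall>z. Qle P x z \<and> Qle P y z \<longrightarrow> Qle P l z)))"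

definition local_homeomorphism :: "'a topology \<Rightarrow> 'b topology \<Rightarrow> ('a \<Rightarrow> 'b) \<Rightarrow> bool" where
  "local_homeomorphism X Y f \<longleftrightarrow>
     (\<forall>x\<in>topspace X. \<exists>U. openin X U \<and> x \<in> U \<and> openin Y (f ` U) \<and>
        homeomorphic_map (subtopology X U) (subtopology Y (f ` U)) f)"

text \<open>Topological P-graph. TL is the topology on Lambda = topspace TL, T0 the topology on
the vertex set Lambda0 = topspace T0 (a subset of Lambda), cmp the (partial) composition.\<close>

definition composable_pairs :: "'l topology \<Rightarrow> ('l \<Rightarrow> 'v) \<Rightarrow> ('l \<Rightarrow> 'v) \<Rightarrow> ('l \<times> 'l) set" where
  "composable_pairs TL r s = {(a, b). a \<in> topspace TL \<and> b \<in> topspace TL \<and> s a = r b}"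

definition top_P_graph ::
  "'q::group_add set \<Rightarrow> 'l topology \<Rightarrow> 'l topology \<Rightarrow> ('l \<Rightarrow> 'l) \<Rightarrow> ('l \<Rightarrow> 'l)
     \<Rightarrow> ('l \<Rightarrow> 'l \<Rightarrow> 'l) \<Rightarrow> ('l \<Rightarrow> 'q) \<Rightarrow> bool" where
  "top_P_graph P TL T0 r s cmp d \<longleftrightarrow>
     \<comment> \<open>small category structure\<close>
     topspace T0 \<subseteq> topspace TL \<and>
     (\<forall>v\<in>topspace T0. r v = v \<and> s v = v) \<and>
     (\<forall>(a, b)\<in>composable_pairs TL r s.
         cmp a b \<in> topspace TL \<and> r (cmp a b) = r a \<and> s (cmp a b) = s b) \<and>
     (\<forall>a\<in>topspace TL. \<forall>b\<in>topspace TL. \<forall>c\<in>topspace TL.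
         s a = r b \<longrightarrow> s b = r c \<longrightarrow> cmp (cmp a b) c = cmp a (cmp b c)) \<and>
     (\<forall>a\<in>topspace TL. cmp (r a) a = a \<and> cmp a (s a) = a) \<and>
     \<comment> \<open>topology\<close>
     Hausdorff_space TL \<and> locally_compact_space TL \<and>
     Hausdorff_space T0 \<and> locally_compact_space T0 \<and>
     continuous_map TL T0 r \<and> continuous_map TL T0 s \<and>
     local_homeomorphism TL T0 s \<and>
     continuous_map T0 TL id \<and>
     continuous_map (subtopology (prod_topology TL TL) (composable_pairs TL r s)) TL
        (\<lambda>(a, b). cmp a b) \<and>
     open_map (subtopology (prod_topology TL TL) (composable_pairs TL r s)) TL
        (\<lambda>(a, b). cmp a b) \<and>
     \<comment> \<open>degree map, P carrying the discrete topology\<close>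
     continuous_map TL (discrete_topology P) d \<and>
     (\<forall>(a, b)\<in>composable_pairs TL r s. d (cmp a b) = d a + d b) \<and>
     (\<forall>v\<in>topspace T0. d v = 0) \<and>
     \<comment> \<open>factorisation: composition Lambda^m * Lambda^n \<rightarrow> Lambda^(mn) is a homeomorphism\<close>
     (\<forall>m\<in>P. \<forall>n\<in>P.
        homeomorphic_map
          (subtopology (prod_topology TL TL)
             {(a, b) \<in> composable_pairs TL r s. d a = m \<and> d b = n})
          (subtopology TL {x \<in> topspace TL. d x = m + n})
          (\<lambda>(a, b). cmp a b))"

definition rd_proper ::
  "'q set \<Rightarrow> 'l topology \<Rightarrow> 'l topology \<Rightarrow> ('l \<Rightarrow> 'l) \<Rightarrow> ('l \<Rightarrow> 'q) \<Rightarrow> bool" where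
  "rd_proper P TL T0 r d \<longleftrightarrow>
     continuous_map TL (prod_topology T0 (discrete_topology P)) (\<lambda>x. (r x, d x)) \<and>
     (\<forall>K. compactin (prod_topology T0 (discrete_topology P)) K \<longrightarrow>
          compactin TL {x \<in> topspace TL. (r x, d x) \<in> K})"

definition path_le :: "'l topology \<Rightarrow> ('l \<Rightarrow> 'l) \<Rightarrow> ('l \<Rightarrow> 'l) \<Rightarrow> ('l \<Rightarrow> 'l \<Rightarrow> 'l)
     \<Rightarrow> 'l \<Rightarrow> 'l \<Rightarrow> bool" where
  "path_le TL r s cmp mu lam \<longleftrightarrow>
     mu \<in> topspace TL \<and> (\<exists>nu\<in>topspace TL. s mu = r nu \<and> lam = cmp mu nu)"

definition common_upper_bound :: "'l topology \<Rightarrow> ('l \<Rightarrow> 'l) \<Rightarrow> ('l \<Rightarrow> 'l) \<Rightarrow> ('l \<Rightarrow> 'l \<Rightarrow> 'l)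
     \<Rightarrow> 'l set \<Rightarrow> 'l \<Rightarrow> 'l \<Rightarrow> bool" where
  "common_upper_bound TL r s cmp B lam mu \<longleftrightarrow>
     (\<exists>nu\<in>B. path_le TL r s cmp lam nu \<and> path_le TL r s cmp mu nu)"

definition path_space :: "'l topology \<Rightarrow> ('l \<Rightarrow> 'l) \<Rightarrow> ('l \<Rightarrow> 'l) \<Rightarrow> ('l \<Rightarrow> 'l \<Rightarrow> 'l)
     \<Rightarrow> 'l set set" where
  "path_space TL r s cmp =
     {A. A \<noteq> {} \<and> A \<subseteq> topspace TL \<and> closedin TL A \<and>
         (\<forall>lam\<in>A. \<forall>mu. path_le TL r s cmp mu lam \<longrightarrow> mu \<in> A) \<and>
         (\<forall>lam\<in>A. \<forall>mu\<in>A. common_upper_bound TL r s cmp A lam mu)}"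

definition exhaustive :: "'l topology \<Rightarrow> ('l \<Rightarrow> 'l) \<Rightarrow> ('l \<Rightarrow> 'l) \<Rightarrow> ('l \<Rightarrow> 'l \<Rightarrow> 'l)
     \<Rightarrow> 'l set \<Rightarrow> bool" where
  "exhaustive TL r s cmp E \<longleftrightarrow> E \<subseteq> topspace TL \<and>
     (\<forall>lam\<in>topspace TL. r lam \<in> r ` E \<longrightarrow>
        (\<exists>mu\<in>E. common_upper_bound TL r s cmp (topspace TL) lam mu))"

definition extendable :: "'l topology \<Rightarrow> 'l topology \<Rightarrow> ('l \<Rightarrow> 'l) \<Rightarrow> ('l \<Rightarrow> 'l)
     \<Rightarrow> ('l \<Rightarrow> 'l \<Rightarrow> 'l) \<Rightarrow> 'l set \<Rightarrow> 'l \<Rightarrow> bool" where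
  "extendable TL T0 r s cmp A lam \<longleftrightarrow> lam \<in> A \<and>
     (\<forall>E. compactin TL E \<longrightarrow> exhaustive TL r s cmp E \<longrightarrow>
        (\<exists>U. openin T0 U \<and> s lam \<in> U \<and> U \<subseteq> r ` E) \<longrightarrow>
        (\<exists>mu\<in>E. s lam = r mu \<and> cmp lam mu \<in> A))"

end

theory Submission
  imports Defs
begin

text \<open>Write \<open>\<lambda>' = \<lambda>\<nu>\<close>. Given a compact exhaustive \<open>E\<close> whose range covers a neighbourhood
  of \<open>s(\<lambda>)\<close>, choose a compact neighbourhood \<open>N\<close> of \<open>\<nu>\<close> on which \<open>s\<close> is injective and
  \<open>d\<close> is constant, and pull \<open>E\<close> back along \<open>N\<close>: take the paths \<open>\<alpha>\<close> with \<open>r(\<alpha>) \<in> s(N)\<close>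
  such that \<open>\<sigma>(r(\<alpha>))\<alpha>\<close> extends a path of \<open>E\<close>, \<open>\<sigma>\<close> being the inverse of \<open>s\<close> on \<open>N\<close>.
  Factorising common extensions at the least upper bound of the degrees shows that this
  pullback is exhaustive and that its range contains \<open>s(N) \<ni> s(\<lambda>')\<close>; properness of
  \<open>(r, d)\<close> makes it compact. Extendability of \<open>\<lambda>'\<close> gives \<open>\<alpha>\<close> in the pullback with
  \<open>\<lambda>'\<alpha> \<in> A\<close>, and if \<open>\<mu> \<in> E\<close> lies below \<open>\<nu>\<alpha>\<close> then \<open>\<lambda>\<mu> \<le> \<lambda>'\<alpha>\<close>, so \<open>\<lambda>\<mu> \<in> A\<close>
  by heredity.\<close>

lemma Qle_antisym:
  assumes "quasi_lattice_ordered P" "Qle P a b" "Qle P b a"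
  shows "a = b"
proof -
  obtain x y where xy: "x \<in> P" "y \<in> P" "b = a + x" "a = b + y"
    using assms(2,3) unfolding Qle_def by blast
  then have "a + (x + y) = a + 0" by (metis add.assoc add_0_right)
  then have "x = - y" by (simp only: add_left_cancel eq_neg_iff_add_eq_0)
  then have "x \<in> P \<inter> uminus ` P" using xy(1,2) by blast
  then show "a = b" using assms(1) xy(3) unfolding quasi_lattice_ordered_def by auto
qed

definition Qlub :: "'q::group_add set \<Rightarrow> 'q \<Rightarrow> 'q \<Rightarrow> 'q \<Rightarrow> bool" where
  "Qlub P a b l \<longleftrightarrow> Qle P a l \<and> Qle P b l \<and> (\<forall>z. Qle P a z \<and> Qle P b z \<longrightarrow> Qle P l z)"

lemma Qlub_unique:
  "quasi_lattice_ordered P \<Longrightarrow> Qlub P a b l \<Longrightarrow> Qlub P a b l' \<Longrightarrow> l = l'"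
  unfolding Qlub_def by (meson Qle_antisym)

lemma Qlub_exists:
  "quasi_lattice_ordered P \<Longrightarrow> Qle P a z \<Longrightarrow> Qle P b z \<Longrightarrow> \<exists>l. Qlub P a b l"
  unfolding quasi_lattice_ordered_def Qlub_def by blast

definition lub_increments :: "'q::group_add set \<Rightarrow> 'q \<Rightarrow> 'q set \<Rightarrow> 'q set" where
  "lub_increments P m F = {q \<in> P. \<exists>p\<in>F. Qlub P m p (m + q)}"

lemma finite_lub_increments:
  assumes "quasi_lattice_ordered P" "finite F"
  shows "finite (lub_increments P m F)"
proof (rule finite_subset[OF _ finite_imageI[OF assms(2)]])
  show "lub_increments P m F \<subseteq> (\<lambda>p. - m + (SOME l. Qlub P m p l)) ` F"
  proof
    fix q assume "q \<in> lub_increments P m F"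
    then obtain p where p: "p \<in> F" "Qlub P m p (m + q)"
      unfolding lub_increments_def by blast
    have "Qlub P m p (SOME l. Qlub P m p l)" using p(2) by (rule someI)
    then have "(SOME l. Qlub P m p l) = m + q" by (rule Qlub_unique[OF assms(1) _ p(2)])
    then have "q = - m + (SOME l. Qlub P m p l)" by (simp add: add.assoc[symmetric])
    then show "q \<in> (\<lambda>p. - m + (SOME l. Qlub P m p l)) ` F" using p(1) by blast
  qed
qed

lemma closedin_if_fibres_closedin:
  assumes f: "continuous_map X (discrete_topology D) f" and "C \<subseteq> topspace X"
    and fibres: "\<And>k. closedin X {x \<in> C. f x = k}"
  shows "closedin X C"
  unfolding closedin_def
proof (intro conjI assms(2) openin_subopen[THEN iffD2] ballI)
  fix x assume x: "x \<in> topspace X - C"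
  have "openin X {y \<in> topspace X. f y \<in> {f x}}"
    using f x by (intro openin_continuous_map_preimage[OF f]) (auto simp: continuous_map_def)
  then have "openin X ({y \<in> topspace X. f y = f x} - {y \<in> C. f y = f x})"
    using fibres by (intro openin_diff) auto
  then show "\<exists>T. openin X T \<and> x \<in> T \<and> T \<subseteq> topspace X - C"
    using x by (intro exI) auto
qed

locale quasi_lattice_P_graph =
  fixes P :: "'q::group_add set" and TL T0 :: "'l topology" and r s :: "'l \<Rightarrow> 'l"
    and cmp :: "'l \<Rightarrow> 'l \<Rightarrow> 'l" and d :: "'l \<Rightarrow> 'q"
  assumes quasi_lattice: "quasi_lattice_ordered P"
    and P_graph: "top_P_graph P TL T0 r s cmp d"
begin

abbreviation "L \<equiv> topspace TL"

abbreviation path_leq (infix "\<preceq>" 50) where "x \<preceq> y \<equiv> path_le TL r s cmp x y"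

lemma cmp_props:
  assumes "a \<in> L" "b \<in> L" "s a = r b"
  shows "cmp a b \<in> L" "r (cmp a b) = r a" "s (cmp a b) = s b" "d (cmp a b) = d a + d b"
  using P_graph assms unfolding top_P_graph_def composable_pairs_def by fastforce+

lemma cmp_assoc:
  assumes "a \<in> L" "b \<in> L" "c \<in> L" "s a = r b" "s b = r c"
  shows "cmp (cmp a b) c = cmp a (cmp b c)"
  using P_graph assms unfolding top_P_graph_def by blast

lemma vertex: "v \<in> topspace T0 \<Longrightarrow> v \<in> L \<and> r v = v \<and> s v = v"
  using P_graph unfolding top_P_graph_def by blast

lemma continuous_r: "continuous_map TL T0 r"
  and continuous_s: "continuous_map TL T0 s"
  and continuous_d: "continuous_map TL (discrete_topology P) d"
  and local_homeomorphism_s: "local_homeomorphism TL T0 s"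
  and Hausdorff: "Hausdorff_space TL" "Hausdorff_space T0"
  and locally_compact: "locally_compact_space TL"
  and continuous_cmp: "continuous_map (subtopology (prod_topology TL TL) (composable_pairs TL r s))
        TL (\<lambda>(a, b). cmp a b)"
  using P_graph unfolding top_P_graph_def by blast+

lemma homeomorphic_cmp:
  "m \<in> P \<Longrightarrow> n \<in> P \<Longrightarrow> homeomorphic_map
     (subtopology (prod_topology TL TL) {(a, b) \<in> composable_pairs TL r s. d a = m \<and> d b = n})
     (subtopology TL {x \<in> L. d x = m + n}) (\<lambda>(a, b). cmp a b)"
  using P_graph unfolding top_P_graph_def by blast

lemma s_in: "a \<in> L \<Longrightarrow> s a \<in> topspace T0"
  and r_in: "a \<in> L \<Longrightarrow> r a \<in> topspace T0"
  and d_in: "a \<in> L \<Longrightarrow> d a \<in> P"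
  using continuous_s continuous_r continuous_d by (auto simp: continuous_map_def Pi_iff)

lemma P_add: "a \<in> P \<Longrightarrow> b \<in> P \<Longrightarrow> a + b \<in> P"
  using quasi_lattice unfolding quasi_lattice_ordered_def by blast

lemma factorisation_exists:
  assumes "x \<in> L" "d x = m + n" "m \<in> P" "n \<in> P"
  obtains a b where "a \<in> L" "b \<in> L" "s a = r b" "d a = m" "d b = n" "x = cmp a b"
proof -
  have "x \<in> (\<lambda>(a, b). cmp a b) ` topspace (subtopology (prod_topology TL TL)
             {(a, b) \<in> composable_pairs TL r s. d a = m \<and> d b = n})"
    using homeomorphic_imp_surjective_map[OF homeomorphic_cmp[OF assms(3,4)]] assms by auto
  then show ?thesis using that unfolding composable_pairs_def by auto
qed

lemma factorisation_unique:
  assumes "a \<in> L" "b \<in> L" "s a = r b" "a' \<in> L" "b' \<in> L" "s a' = r b'"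
    and "d a = d a'" "cmp a b = cmp a' b'"
  shows "a = a'" "b = b'"
proof -
  let ?D = "{(x, y) \<in> composable_pairs TL r s. d x = d a \<and> d y = d b}"
  have "d b = d b'"
    using cmp_props(4)[OF assms(1-3)] cmp_props(4)[OF assms(4-6)] assms(7,8) by simp
  then have ab: "(a, b) \<in> topspace (subtopology (prod_topology TL TL) ?D)"
    and ab': "(a', b') \<in> topspace (subtopology (prod_topology TL TL) ?D)"
    using assms unfolding composable_pairs_def by auto
  have "inj_on (\<lambda>(a, b). cmp a b) (topspace (subtopology (prod_topology TL TL) ?D))"
    using homeomorphic_imp_injective_map[OF homeomorphic_cmp[OF d_in d_in]] assms(1,2) .
  from inj_onD[OF this _ ab ab'] have "(a, b) = (a', b')" using assms(8) by simp
  then show "a = a'" "b = b'" by simp_all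
qed

lemma cmp_left_cancel:
  assumes "a \<in> L" "b \<in> L" "b' \<in> L" "s a = r b" "s a = r b'" "cmp a b = cmp a b'"
  shows "b = b'"
  using factorisation_unique(2)[of a b a b'] assms by simp

lemma path_le_cmp: "a \<in> L \<Longrightarrow> b \<in> L \<Longrightarrow> s a = r b \<Longrightarrow> a \<preceq> cmp a b"
  unfolding path_le_def by blast

lemma path_leE:
  assumes "x \<preceq> y"
  obtains b where "x \<in> L" "b \<in> L" "s x = r b" "y = cmp x b"
  using assms unfolding path_le_def by blast

lemma path_le_in: "x \<preceq> y \<Longrightarrow> y \<in> L"
  by (auto elim!: path_leE simp: cmp_props)

lemma path_le_range: "x \<preceq> y \<Longrightarrow> r x = r y"
  by (auto elim!: path_leE simp: cmp_props)

lemma path_le_cmp_left: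
  assumes "a \<in> L" "s a = r x" "x \<preceq> y"
  shows "cmp a x \<preceq> cmp a y"
proof -
  obtain b where "x \<in> L" "b \<in> L" "s x = r b" "y = cmp x b" using assms(3) by (rule path_leE)
  then show ?thesis using assms(1,2) unfolding path_le_def by (metis cmp_assoc cmp_props)
qed

lemma path_le_trans:
  assumes "x \<preceq> y" "y \<preceq> z"
  shows "x \<preceq> z"
proof -
  obtain a b where "x \<in> L" "a \<in> L" "s x = r a" "y = cmp x a" "b \<in> L" "s y = r b" "z = cmp y b"
    using assms by (auto elim!: path_leE)
  then show ?thesis
    unfolding path_le_def by (metis cmp_assoc cmp_props)
qed

lemma Qle_path_le_degree: "x \<preceq> y \<Longrightarrow> Qle P (d x) (d y)"
  unfolding Qle_def by (auto elim!: path_leE simp: cmp_props d_in)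

lemma path_le_of_degree:
  assumes "y \<in> L" "l \<in> P" "Qle P l (d y)"
  obtains x where "d x = l" "x \<preceq> y"
  using assms factorisation_exists[OF assms(1) _ assms(2)] path_le_cmp
  unfolding Qle_def by metis

lemma path_le_if_Qle_degree:
  assumes "x \<preceq> z" "y \<preceq> z" "Qle P (d x) (d y)"
  shows "x \<preceq> y"
proof -
  obtain b c where b: "x \<in> L" "b \<in> L" "s x = r b" "z = cmp x b"
    and c: "y \<in> L" "c \<in> L" "s y = r c" "z = cmp y c"
    using assms(1,2) by (auto elim!: path_leE)
  obtain w where "w \<in> P" "d y = d x + w" using assms(3) unfolding Qle_def by blast
  then obtain x' b' where x': "x' \<in> L" "b' \<in> L" "s x' = r b'" "d x' = d x" "y = cmp x' b'"
    using factorisation_exists[OF c(1) _ d_in[OF b(1)]] by metis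
  have "z = cmp x' (cmp b' c)"
    using c x' cmp_assoc cmp_props(3) by metis
  then have "x' = x"
    using factorisation_unique(1)[OF x'(1) cmp_props(1)[OF x'(2) c(2)] _ b(1-3)] b(4) x' c
    by (simp add: cmp_props)
  then show ?thesis using x' path_le_cmp by blast
qed

text \<open>The path \<open>cmp nu al\<close> is the initial segment of \<open>xi\<close> whose degree is the least upper
  bound of \<open>d nu\<close> and \<open>d mu\<close>; unique factorisation makes it an upper bound of both.\<close>

lemma extension_through_lub:
  assumes nu: "nu \<in> L" "ga \<in> L" "s nu = r ga"
    and le: "cmp nu ga \<preceq> xi" "mu \<preceq> xi"
  obtains al where "al \<in> L" "r al = s nu" "Qlub P (d nu) (d mu) (d nu + d al)"
    "mu \<preceq> cmp nu al" "common_upper_bound TL r s cmp L ga al"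
proof -
  have nu_xi: "nu \<preceq> xi" using path_le_trans[OF path_le_cmp[OF nu] le(1)] .
  obtain l where l: "Qlub P (d nu) (d mu) l"
    using Qlub_exists[OF quasi_lattice Qle_path_le_degree[OF nu_xi] Qle_path_le_degree[OF le(2)]]
    by blast
  then have "Qle P l (d xi)" "Qle P (d nu) l" "Qle P (d mu) l"
    using Qle_path_le_degree[OF nu_xi] Qle_path_le_degree[OF le(2)] unfolding Qlub_def by blast+
  moreover from this(2) have "l \<in> P" unfolding Qle_def using P_add d_in[OF nu(1)] by blast
  ultimately obtain ze where ze: "d ze = l" "ze \<preceq> xi"
    using path_le_of_degree[OF path_le_in[OF le(2)]] by blast
  have "nu \<preceq> ze" "mu \<preceq> ze"
    using path_le_if_Qle_degree nu_xi le(2) ze \<open>Qle P (d nu) l\<close> \<open>Qle P (d mu) l\<close> by blast+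
  then obtain al where al: "al \<in> L" "s nu = r al" "ze = cmp nu al" by (auto elim: path_leE)
  obtain c where c: "c \<in> L" "s ze = r c" "xi = cmp ze c" using ze(2) by (auto elim: path_leE)
  obtain a where a: "a \<in> L" "s ga = r a" "xi = cmp (cmp nu ga) a"
    using le(1) by (auto elim: path_leE simp: cmp_props nu)
  have "cmp nu (cmp ga a) = cmp nu (cmp al c)"
    using a c al nu by (metis cmp_assoc cmp_props(3))
  then have "cmp ga a = cmp al c"
    using cmp_left_cancel nu a c al by (metis cmp_props(1,2,3))
  then have "common_upper_bound TL r s cmp L ga al"
    unfolding common_upper_bound_def using a c al nu
    by (metis cmp_props path_le_cmp)
  moreover have "Qlub P (d nu) (d mu) (d nu + d al)"
    using l ze al nu cmp_props(4) by metis
  ultimately show ?thesis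
    using that al ze \<open>mu \<preceq> ze\<close> by metis
qed

definition extensions :: "'l set \<Rightarrow> 'l set" where
  "extensions E = {xi. \<exists>mu\<in>E. mu \<preceq> xi}"

lemma closedin_degree_fibre: "closedin TL {x \<in> L. d x = k}"
proof -
  have "closedin TL {x \<in> L. d x \<in> {k} \<inter> P}"
    by (intro closedin_continuous_map_preimage[OF continuous_d]) auto
  moreover have "{x \<in> L. d x \<in> {k} \<inter> P} = {x \<in> L. d x = k}" using d_in by auto
  ultimately show ?thesis by simp
qed

lemma closedin_cmp_image:
  assumes E: "closedin TL E" and p: "p \<in> P"
  shows "closedin TL ((\<lambda>(a, b). cmp a b) `
           {(a, b) \<in> composable_pairs TL r s. d a = p \<and> d b = n \<and> a \<in> E})"
    (is "closedin TL ?H")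
proof (cases "n \<in> P")
  case False
  then have "?H = {}" using d_in unfolding composable_pairs_def by auto
  then show ?thesis by (metis closedin_empty)
next
  case True
  let ?Dom = "{(a, b) \<in> composable_pairs TL r s. d a = p \<and> d b = n}"
  let ?X = "subtopology (prod_topology TL TL) ?Dom"
  have "closedin ?X {z \<in> topspace ?X. fst z \<in> E}"
    by (rule closedin_continuous_map_preimage[OF
          continuous_map_from_subtopology[OF continuous_map_fst] E])
  then have "closedin (subtopology TL {x \<in> L. d x = p + n})
      ((\<lambda>(a, b). cmp a b) ` {z \<in> topspace ?X. fst z \<in> E})"
    using homeomorphic_imp_closed_map[OF homeomorphic_cmp[OF p True]]
    unfolding closed_map_def by blast
  moreover have "{z \<in> topspace ?X. fst z \<in> E} =
      {(a, b) \<in> composable_pairs TL r s. d a = p \<and> d b = n \<and> a \<in> E}"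
    unfolding composable_pairs_def by auto
  ultimately have "closedin (subtopology TL {x \<in> L. d x = p + n}) ?H" by simp
  then show ?thesis
    using closedin_trans_full closedin_degree_fibre by blast
qed

text \<open>The degree fibres form an open partition of \<open>\<Lambda>\<close>, and on the fibre of degree \<open>k\<close>
  the set \<open>extensions E\<close> is a finite union, over the degrees \<open>p \<in> d ` E\<close>, of composition
  images of the closed sets of pairs in \<open>E \<times> \<Lambda>\<close> of degree \<open>(p, - p + k)\<close>.\<close>

lemma closedin_extensions:
  assumes E: "closedin TL E" "finite (d ` E)"
  shows "closedin TL (extensions E)"
proof (rule closedin_if_fibres_closedin[OF continuous_d])
  show "extensions E \<subseteq> L" unfolding extensions_def using path_le_in by blast
  fix k
  have fibre: "{xi \<in> extensions E. d xi = k} = (\<Union>p\<in>d ` E. (\<lambda>(a, b). cmp a b) `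
          {(a, b) \<in> composable_pairs TL r s. d a = p \<and> d b = - p + k \<and> a \<in> E})"
  proof (intro equalityI subsetI)
    fix xi assume "xi \<in> {xi \<in> extensions E. d xi = k}"
    then obtain mu b where "mu \<in> E" "mu \<in> L" "b \<in> L" "s mu = r b" "xi = cmp mu b" "d xi = k"
      unfolding extensions_def by (auto elim: path_leE)
    moreover from this have "d b = - d mu + k" using cmp_props(4) by (metis minus_add_cancel)
    ultimately show "xi \<in> (\<Union>p\<in>d ` E. (\<lambda>(a, b). cmp a b) `
          {(a, b) \<in> composable_pairs TL r s. d a = p \<and> d b = - p + k \<and> a \<in> E})"
      unfolding composable_pairs_def by force
  next
    fix xi assume "xi \<in> (\<Union>p\<in>d ` E. (\<lambda>(a, b). cmp a b) `
          {(a, b) \<in> composable_pairs TL r s. d a = p \<and> d b = - p + k \<and> a \<in> E})"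
    then show "xi \<in> {xi \<in> extensions E. d xi = k}"
      unfolding extensions_def composable_pairs_def
      by (fastforce simp: cmp_props add.assoc[symmetric] intro: path_le_cmp)
  qed
  have "d ` E \<subseteq> P" using closedin_subset[OF E(1)] d_in by auto
  then show "closedin TL {xi \<in> extensions E. d xi = k}"
    unfolding fibre using closedin_cmp_image[OF E(1)]
    by (intro closedin_Union[OF finite_imageI[OF E(2)]]) blast
qed

lemma injective_source_neighbourhood:
  assumes "nu \<in> L" "openin TL Q" "nu \<in> Q"
  obtains V N where "openin T0 (s ` V)" "nu \<in> V" "V \<subseteq> N" "N \<subseteq> Q"
    "compactin TL N" "inj_on s N"
proof -
  obtain W where W: "openin TL W" "nu \<in> W" "openin T0 (s ` W)"
      "homeomorphic_map (subtopology TL W) (subtopology T0 (s ` W)) s"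
    using local_homeomorphism_s assms(1) unfolding local_homeomorphism_def by blast
  have "neighbourhood_base_of (compactin TL) TL"
    using locally_compact_space_neighbourhood_base locally_compact Hausdorff(1) by blast
  then have "\<exists>V N. openin TL V \<and> compactin TL N \<and> nu \<in> V \<and> V \<subseteq> N \<and> N \<subseteq> W \<inter> Q"
    unfolding neighbourhood_base_of
    using openin_Int[OF W(1) assms(2)] IntI[OF W(2) assms(3)] by blast
  then obtain V N where VN: "openin TL V" "compactin TL N" "nu \<in> V" "V \<subseteq> N" "N \<subseteq> W \<inter> Q"
    by blast
  have "inj_on s (L \<inter> W)"
    using homeomorphic_imp_injective_map[OF W(4)] by simp
  then have "inj_on s N"
    by (rule inj_on_subset) (use VN(5) compactin_subset_topspace[OF VN(2)] in blast)
  have "openin (subtopology TL W) V"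
    unfolding openin_subtopology using VN by blast
  moreover have "open_map (subtopology TL W) (subtopology T0 (s ` W)) s"
    using W(4) by (rule homeomorphic_imp_open_map)
  ultimately have "openin (subtopology T0 (s ` W)) (s ` V)"
    unfolding open_map_def by blast
  then have "openin T0 (s ` V)" using W(3) by (rule openin_trans_full)
  with \<open>inj_on s N\<close> show ?thesis using that VN by blast
qed

lemma continuous_inverse_source:
  assumes "compactin TL N" "inj_on s N"
  shows "continuous_map (subtopology T0 (s ` N)) TL (inv_into N s)"
proof -
  have "continuous_map (subtopology T0 (s ` N)) (subtopology TL N) (inv_into N s)"
  proof (rule continuous_inverse_map)
    show "compact_space (subtopology TL N)" using assms(1) by (rule compact_space_subtopology)
    show "continuous_map (subtopology TL N) T0 s"
      using continuous_s by (rule continuous_map_from_subtopology)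
  qed (use Hausdorff(2) assms compactin_subset_topspace in auto)
  then show ?thesis by (rule continuous_map_into_fulltopology)
qed

lemma continuous_cmp_section:
  assumes sig: "continuous_map (subtopology T0 S) TL sig" "\<And>v. v \<in> S \<Longrightarrow> s (sig v) = v"
  shows "continuous_map (subtopology TL {al \<in> L. r al \<in> S}) TL (\<lambda>al. cmp (sig (r al)) al)"
proof -
  have "continuous_map (subtopology TL {al \<in> L. r al \<in> S}) (subtopology T0 S) r"
    by (rule continuous_map_into_subtopology[OF continuous_map_from_subtopology[OF continuous_r]])
       auto
  then have "continuous_map (subtopology TL {al \<in> L. r al \<in> S}) TL (\<lambda>al. sig (r al))"
    using continuous_map_compose[OF _ sig(1)] by (simp add: o_def)
  moreover have "continuous_map (subtopology TL {al \<in> L. r al \<in> S}) TL (\<lambda>al. al)"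
    using continuous_map_from_subtopology[OF continuous_map_id] by (simp add: id_def)
  ultimately have "continuous_map (subtopology TL {al \<in> L. r al \<in> S})
      (subtopology (prod_topology TL TL) (composable_pairs TL r s)) (\<lambda>al. (sig (r al), al))"
    by (rule continuous_map_into_subtopology[OF continuous_map_pairedI])
       (use sig r_in in \<open>auto simp: composable_pairs_def continuous_map_def\<close>)
  from continuous_map_compose[OF this continuous_cmp] show ?thesis by (simp add: o_def)
qed

text \<open>With \<open>N\<close> a compact set on which \<open>s\<close> is injective, \<open>inv_into N s\<close> is a continuous
  section of \<open>s\<close> over \<open>s ` N\<close>. The degree condition is automatic for the paths produced by
  \<open>extension_through_lub\<close> and confines the pullback to finitely many degrees, which
  together with properness of \<open>(r, d)\<close> makes it compact.\<close>

definition pullback :: "'l set \<Rightarrow> 'q \<Rightarrow> 'l set \<Rightarrow> 'l set" where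
  "pullback N m E = {al \<in> L. r al \<in> s ` N \<and> d al \<in> lub_increments P m (d ` E) \<and>
     cmp (inv_into N s (r al)) al \<in> extensions E}"

lemma pullback_extends:
  assumes "inj_on s N" "nu \<in> N" "al \<in> pullback N m E" "s nu = r al"
  shows "cmp nu al \<in> extensions E"
proof -
  have "inv_into N s (r al) = nu" using inv_into_f_f[OF assms(1,2)] assms(4) by simp
  then show ?thesis using assms(3) unfolding pullback_def by simp
qed

lemma pullback_meets:
  assumes E: "exhaustive TL r s cmp E"
    and N: "N \<subseteq> L" "inj_on s N" "\<And>x. x \<in> N \<Longrightarrow> d x = m \<and> r x \<in> r ` E"
    and nu: "nu \<in> N" and ga: "ga \<in> L" "s nu = r ga"
  obtains al where "al \<in> pullback N m E" "r al = s nu" "common_upper_bound TL r s cmp L ga al"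
proof -
  have "cmp nu ga \<in> L" "r (cmp nu ga) \<in> r ` E"
    using cmp_props[OF _ ga] nu N by auto
  then obtain mu xi where mu: "mu \<in> E" "cmp nu ga \<preceq> xi" "mu \<preceq> xi"
    using E unfolding exhaustive_def common_upper_bound_def by blast
  obtain al where al: "al \<in> L" "r al = s nu" "Qlub P (d nu) (d mu) (d nu + d al)"
    "mu \<preceq> cmp nu al" "common_upper_bound TL r s cmp L ga al"
    using extension_through_lub[OF _ ga mu(2,3)] nu N(1) by blast
  have "d al \<in> lub_increments P m (d ` E)"
    using al(1,3) mu(1) nu N(3) d_in unfolding lub_increments_def by auto
  moreover have "cmp (inv_into N s (r al)) al \<in> extensions E"
    using al(2,4) mu(1) nu N(2) unfolding extensions_def by auto
  ultimately have "al \<in> pullback N m E"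
    using al(1,2) nu unfolding pullback_def by auto
  then show ?thesis using that al by blast
qed

lemma exhaustive_pullback:
  assumes "exhaustive TL r s cmp E"
    and "N \<subseteq> L" "inj_on s N" "\<And>x. x \<in> N \<Longrightarrow> d x = m \<and> r x \<in> r ` E"
  shows "exhaustive TL r s cmp (pullback N m E)"
  unfolding exhaustive_def
proof (intro conjI ballI impI)
  show "pullback N m E \<subseteq> L" unfolding pullback_def by blast
  fix ga assume "ga \<in> L" "r ga \<in> r ` pullback N m E"
  then have "r ga \<in> s ` N" unfolding pullback_def by auto
  then obtain nu where "nu \<in> N" "s nu = r ga" by auto
  then show "\<exists>al\<in>pullback N m E. common_upper_bound TL r s cmp L ga al"
    using pullback_meets[OF assms] \<open>ga \<in> L\<close> by metis
qed

lemma source_subset_range_pullback: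
  assumes "exhaustive TL r s cmp E"
    and "N \<subseteq> L" "inj_on s N" "\<And>x. x \<in> N \<Longrightarrow> d x = m \<and> r x \<in> r ` E"
  shows "s ` N \<subseteq> r ` pullback N m E"
proof
  fix v assume "v \<in> s ` N"
  then obtain nu where nu: "nu \<in> N" "v = s nu" by blast
  then have "s nu \<in> L" "s nu = r (s nu)" using vertex[OF s_in] assms(2) by auto
  then show "v \<in> r ` pullback N m E"
    using pullback_meets[OF assms nu(1)] nu(2) by (metis image_eqI)
qed

lemma compactin_pullback:
  assumes "rd_proper P TL T0 r d" "compactin TL E" "compactin TL N" "inj_on s N"
  shows "compactin TL (pullback N m E)"
proof -
  let ?F = "lub_increments P m (d ` E)"
  have "finite (d ` E)"
    using image_compactin[OF assms(2) continuous_d] by (simp add: compactin_discrete_topology)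
  then have "finite ?F" by (rule finite_lub_increments[OF quasi_lattice])
  moreover have "compactin T0 (s ` N)" using image_compactin[OF assms(3) continuous_s] .
  ultimately have "compactin (prod_topology T0 (discrete_topology P)) (s ` N \<times> ?F)"
    by (simp add: compactin_Times compactin_discrete_topology lub_increments_def)
  then have K: "compactin TL {x \<in> L. (r x, d x) \<in> s ` N \<times> ?F}"
    using assms(1) unfolding rd_proper_def by blast
  let ?Z = "{al \<in> L. r al \<in> s ` N}"
  have "closedin (subtopology TL ?Z) {al \<in> topspace (subtopology TL ?Z).
      cmp (inv_into N s (r al)) al \<in> extensions E}"
  proof (rule closedin_continuous_map_preimage)
    show "continuous_map (subtopology TL ?Z) TL (\<lambda>al. cmp (inv_into N s (r al)) al)"
      using continuous_cmp_section[OF continuous_inverse_source[OF assms(3,4)]]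
      by (simp add: f_inv_into_f)
    show "closedin TL (extensions E)"
      using closedin_extensions[OF compactin_imp_closedin[OF Hausdorff(1) assms(2)]]
        \<open>finite (d ` E)\<close> .
  qed
  moreover have "closedin TL ?Z"
    using closedin_continuous_map_preimage[OF continuous_r
        compactin_imp_closedin[OF Hausdorff(2) \<open>compactin T0 (s ` N)\<close>]] .
  ultimately have ext: "closedin TL {al \<in> ?Z. cmp (inv_into N s (r al)) al \<in> extensions E}"
    using closedin_trans_full by fastforce
  have deg: "closedin TL {al \<in> L. d al \<in> ?F}"
    by (rule closedin_continuous_map_preimage[OF continuous_d]) (auto simp: lub_increments_def)
  have "pullback N m E = {al \<in> ?Z. cmp (inv_into N s (r al)) al \<in> extensions E}
      \<inter> {al \<in> L. d al \<in> ?F}"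
    unfolding pullback_def by auto
  then have "closedin TL (pullback N m E)" using closedin_Int[OF ext deg] by simp
  moreover have "pullback N m E \<subseteq> {x \<in> L. (r x, d x) \<in> s ` N \<times> ?F}"
    unfolding pullback_def by auto
  ultimately show ?thesis using closed_compactin[OF K] by blast
qed

lemma compact_exhaustive_pullback_near:
  assumes rd: "rd_proper P TL T0 r d"
    and E: "compactin TL E" "exhaustive TL r s cmp E"
    and U: "openin T0 U" "U \<subseteq> r ` E"
    and nu: "nu \<in> L" "r nu \<in> U"
  obtains N W where "nu \<in> N" "inj_on s N" "openin T0 W" "s nu \<in> W"
    "W \<subseteq> r ` pullback N (d nu) E" "compactin TL (pullback N (d nu) E)"
    "exhaustive TL r s cmp (pullback N (d nu) E)"
proof -
  have nu_in: "nu \<in> {x \<in> L. r x \<in> U} \<inter> {x \<in> L. d x \<in> {d nu}}" using nu by auto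
  have "openin TL ({x \<in> L. r x \<in> U} \<inter> {x \<in> L. d x \<in> {d nu}})"
    using d_in[OF nu(1)]
    by (intro openin_Int openin_continuous_map_preimage[OF continuous_r U(1)]
        openin_continuous_map_preimage[OF continuous_d]) auto
  then obtain V N where VN: "openin T0 (s ` V)" "nu \<in> V" "V \<subseteq> N"
    "N \<subseteq> {x \<in> L. r x \<in> U} \<inter> {x \<in> L. d x \<in> {d nu}}" "compactin TL N" "inj_on s N"
    using injective_source_neighbourhood[OF nu(1) _ nu_in] by blast
  then have N: "N \<subseteq> L" "\<And>x. x \<in> N \<Longrightarrow> d x = d nu \<and> r x \<in> r ` E" using U(2) by auto
  have "s ` V \<subseteq> r ` pullback N (d nu) E"
    using source_subset_range_pullback[OF E(2) N(1) VN(6) N(2)] VN(3) by blast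
  then show ?thesis
    using that VN compactin_pullback[OF rd E(1) VN(5,6)]
      exhaustive_pullback[OF E(2) N(1) VN(6) N(2)] by blast
qed

lemma extendable_if_path_le:
  assumes rd: "rd_proper P TL T0 r d" and A: "A \<in> path_space TL r s cmp"
    and ext: "extendable TL T0 r s cmp A lam'" and le: "lam \<preceq> lam'"
  shows "extendable TL T0 r s cmp A lam"
proof -
  obtain nu where nu: "lam \<in> L" "nu \<in> L" "s lam = r nu" "lam' = cmp lam nu"
    using le by (rule path_leE)
  have hereditary: "\<And>x y. x \<in> A \<Longrightarrow> y \<preceq> x \<Longrightarrow> y \<in> A"
    using A unfolding path_space_def by blast
  have "\<exists>mu\<in>E. s lam = r mu \<and> cmp lam mu \<in> A"
    if E: "compactin TL E" "exhaustive TL r s cmp E" and U: "openin T0 U" "s lam \<in> U" "U \<subseteq> r ` E"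
    for E U
  proof -
    obtain N W where NW: "nu \<in> N" "inj_on s N" "openin T0 W" "s nu \<in> W"
      "W \<subseteq> r ` pullback N (d nu) E" "compactin TL (pullback N (d nu) E)"
      "exhaustive TL r s cmp (pullback N (d nu) E)"
      using compact_exhaustive_pullback_near[OF rd E U(1,3) nu(2)] U(2) nu(3) by metis
    then obtain al where al: "al \<in> pullback N (d nu) E" "s lam' = r al" "cmp lam' al \<in> A"
      using ext nu unfolding extendable_def by (auto simp: cmp_props)
    have al_L: "al \<in> L" and nu_al: "s nu = r al"
      using al(1,2) nu unfolding pullback_def by (auto simp: cmp_props)
    then obtain mu where mu: "mu \<in> E" "mu \<preceq> cmp nu al"
      using pullback_extends[OF NW(2,1) al(1)] unfolding extensions_def by blast
    have "s lam = r mu"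
      using path_le_range[OF mu(2)] cmp_props(2)[OF nu(2) al_L nu_al] nu(3) by simp
    moreover have "cmp lam mu \<preceq> cmp lam' al"
      using path_le_cmp_left[OF nu(1) \<open>s lam = r mu\<close> mu(2)]
        cmp_assoc[OF nu(1,2) al_L nu(3) nu_al] nu(4) by simp
    ultimately show ?thesis using hereditary al(3) mu(1) by blast
  qed
  moreover have "lam \<in> A" using hereditary le ext unfolding extendable_def by blast
  ultimately show ?thesis unfolding extendable_def by blast
qed

end

theorem lemma6p15:
  fixes P :: "'q::group_add set"
    and TL T0 :: "'l topology"
    and r s :: "'l \<Rightarrow> 'l"
    and cmp :: "'l \<Rightarrow> 'l \<Rightarrow> 'l"
    and d :: "'l \<Rightarrow> 'q"
  assumes "quasi_lattice_ordered P"
    and "top_P_graph P TL T0 r s cmp d"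
    and "rd_proper P TL T0 r d"
    and "A \<in> path_space TL r s cmp"
    and "lam' \<in> A"
    and "extendable TL T0 r s cmp A lam'"
    and "lam \<in> topspace TL"
    and "path_le TL r s cmp lam lam'"
  shows "extendable TL T0 r s cmp A lam"
proof -
  interpret quasi_lattice_P_graph P TL T0 r s cmp d
    using assms(1,2) by unfold_locales
  show ?thesis using extendable_if_path_le assms(3,4,6,8) by blast
qed

end
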